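(* Let $\lambda_1\ge0$ and $\lambda_2>0$. Let $P_n$ be the monic polynomials orthogonal with respect to $\langle f,g\rangle_F=\int_{\mathbb R}fg\,e^{-x^4}dx$, $k_n=\langle P_n,P_n\rangle_F$, and $Q_n$ the monic polynomials orthogonal with respect to $\langle f,g\rangle_S=\int_{\mathbb R}fg\,e^{-x^4}dx+\lambda_1f(0)g(0)+\lambda_2f'(0)g'(0)$, $\widehat k_n=\langle Q_n,Q_n\rangle_S$. Then $Q_0(x)=1$, $Q_1(x)=x$, for all $n\ge1$ $$xP_{2n-1}(x)=Q_{2n}(x)+a_nQ_{2n-2}(x),$$ and for all $n\ge2$ $$x^2P_n(x)=Q_{n+2}(x)+b_nQ_n(x)+\alpha_nQ_{n-2}(x),\qquad x^2Q_n(x)=P_{n+2}(x)+\sigma_nP_n(x)+\delta_nP_{n-2}(x),$$ where $a_n=\dfrac{k_{2n-1}}{\widehat k_{2n-2}}$, $\alpha_n=\dfrac{k_n}{\widehat k_{n-2}}$, $b_n=\dfrac{\langle x^2P_n,Q_n\rangle_S}{\langle Q_n,Q_n\rangle_S}$, $\delta_n=\dfrac{\widehat k_n}{k_{n-2}}$, $\sigma_n=b_n\dfrac{\widehat k_n}{k_n}$.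
   Context: All polynomials are real; monic orthogonal polynomials have degree $n$, leading coefficient $1$, and are orthogonal to all polynomials of lower degree in the respective inner product. *)

theory Defs
  imports "HOL-Analysis.Analysis" "HOL-Computational_Algebra.Polynomial"
begin

definition ipF :: "real poly \<Rightarrow> real poly \<Rightarrow> real" where
  "ipF f g = integral\<^sup>L lborel (\<lambda>x. poly f x * poly g x * exp (- (x ^ 4)))"

definition ipS :: "real \<Rightarrow> real \<Rightarrow> real poly \<Rightarrow> real poly \<Rightarrow> real" where
  "ipS l1 l2 f g = ipF f g + l1 * poly f 0 * poly g 0
                   + l2 * poly (pderiv f) 0 * poly (pderiv g) 0"

definition monic_orth :: "(real poly \<Rightarrow> real poly \<Rightarrow> real) \<Rightarrow> nat \<Rightarrow> real poly \<Rightarrow> bool" where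
  "monic_orth ip n p \<longleftrightarrow> degree p = n \<and> lead_coeff p = 1 \<and>
     (\<forall>q. degree q < n \<longrightarrow> ip p q = 0)"

end

theory Submission
  imports Defs "HOL-Probability.Distributions"
begin

text \<open>Both inner products are invariant under x \<mapsto> -x, so P n and Q n have the parity of n.
  Each identity expands a monic polynomial in the orthogonal basis of the other family. Multiplying
  by x^2 moves the Sobolev product to the Freud product, and so does multiplying P m by x for odd m,
  since then P m (0) = 0. The Fourier coefficients thus become Freud inner products, which vanish
  for degree reasons or by parity except at the two (resp. one) listed indices, where they are the
  norms k n and kh n.\<close>

lemma exp_neg_x4_le: "exp (- ((x::real) ^ 4)) \<le> exp (1/16) * exp (- x\<^sup>2 / 2)"
proof -
  have "- (x ^ 4) \<le> 1/16 + - x\<^sup>2 / 2"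
    using zero_le_power2[of "x\<^sup>2 - 1/4"] by (simp add: power2_eq_square power4_eq_xxxx algebra_simps)
  then show ?thesis by (simp flip: exp_add)
qed

lemma integrable_monomial_exp_neg_x4: "integrable lborel (\<lambda>x::real. x ^ n * exp (- (x ^ 4)))"
proof (rule Bochner_Integration.integrable_bound)
  define c where "c = sqrt (2 * pi) * exp (1/16)"
  show "integrable lborel (\<lambda>x. c * (std_normal_density x * \<bar>x\<bar> ^ n))"
    using integrable_std_normal_moment_abs by (rule integrable_mult_right)
  show "(\<lambda>x::real. x ^ n * exp (- (x ^ 4))) \<in> borel_measurable lborel" by measurable
  show "AE x in lborel. norm (x ^ n * exp (- (x ^ 4))) \<le> norm (c * (std_normal_density x * \<bar>x\<bar> ^ n))"
  proof (intro AE_I2)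
    fix x :: real
    have "norm (x ^ n * exp (- (x ^ 4))) = \<bar>x\<bar> ^ n * exp (- (x ^ 4))"
      by (simp add: abs_mult power_abs)
    also have "\<dots> \<le> \<bar>x\<bar> ^ n * (exp (1/16) * exp (- x\<^sup>2 / 2))"
      by (intro mult_left_mono exp_neg_x4_le) simp
    also have "\<dots> = c * (std_normal_density x * \<bar>x\<bar> ^ n)"
      unfolding c_def std_normal_density_def by (simp add: field_simps)
    also have "\<dots> = norm (c * (std_normal_density x * \<bar>x\<bar> ^ n))"
      unfolding c_def by simp
    finally show "norm (x ^ n * exp (- (x ^ 4))) \<le> norm (c * (std_normal_density x * \<bar>x\<bar> ^ n))" .
  qed
qed

lemma integrable_poly_exp_neg_x4: "integrable lborel (\<lambda>x. poly p x * exp (- ((x::real) ^ 4)))"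
proof -
  have eq: "(\<lambda>x. poly p x * exp (- (x ^ 4))) = (\<lambda>x. \<Sum>i\<le>degree p. coeff p i * (x ^ i * exp (- (x ^ 4))))"
    by (simp add: poly_altdef sum_distrib_right mult.assoc)
  show ?thesis
    unfolding eq by (simp add: integrable_monomial_exp_neg_x4)
qed

definition freud_integral :: "real poly \<Rightarrow> real" where
  "freud_integral p = integral\<^sup>L lborel (\<lambda>x. poly p x * exp (- (x ^ 4)))"

lemma ipF_eq_freud_integral: "ipF f g = freud_integral (f * g)"
  unfolding ipF_def freud_integral_def by (simp add: mult.assoc)

lemma freud_integral_add: "freud_integral (p + q) = freud_integral p + freud_integral q"
  unfolding freud_integral_def by (simp add: distrib_right integrable_poly_exp_neg_x4)

lemma freud_integral_smult: "freud_integral (smult c p) = c * freud_integral p"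
  unfolding freud_integral_def by (simp add: mult.assoc)

lemma freud_integral_square_nonneg: "freud_integral (p * p) \<ge> 0"
  unfolding freud_integral_def by (intro integral_nonneg_AE AE_I2) simp

text \<open>A nonzero polynomial vanishes only on a finite, hence null, set.\<close>
lemma freud_integral_square_pos:
  assumes "p \<noteq> 0"
  shows "freud_integral (p * p) > 0"
proof (rule ccontr)
  assume "\<not> freud_integral (p * p) > 0"
  then have "freud_integral (p * p) = 0" using freud_integral_square_nonneg[of p] by linarith
  then have "AE x in lborel. poly (p * p) x * exp (- (x ^ 4)) = 0"
    unfolding freud_integral_def
    by (subst (asm) integral_nonneg_eq_0_iff_AE) (use integrable_poly_exp_neg_x4[of "p * p"] in auto)
  then have zero_ae: "AE x in lborel. poly p x = 0" by (auto elim!: eventually_mono)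
  have nonroot_ae: "AE x in lborel. \<forall>r\<in>{x. poly p x = 0}. x \<noteq> r"
    by (rule AE_finite_allI[OF poly_roots_finite[OF assms]]) (rule AE_lborel_singleton)
  have "AE x in (lborel :: real measure). False"
    using eventually_conj[OF zero_ae nonroot_ae] by (rule eventually_mono) auto
  then have "emeasure (lborel :: real measure) (space lborel) = 0"
    by (simp add: eventually_False ae_filter_eq_bot_iff)
  then show False by simp
qed

definition mirror :: "real poly \<Rightarrow> real poly" where
  "mirror p = p \<circ>\<^sub>p [:0, -1:]"

lemma poly_mirror: "poly (mirror p) x = poly p (- x)"
  unfolding mirror_def by (simp add: poly_pcompose)

lemma mirror_mult: "mirror (p * q) = mirror p * mirror q"
  unfolding mirror_def by (simp add: pcompose_mult)

lemma mirror_mirror: "mirror (mirror p) = p"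
proof -
  have "[:0, -1:] \<circ>\<^sub>p [:0, -1::real:] = [:0, 1:]" by (simp add: pcompose_pCons)
  then show ?thesis unfolding mirror_def by (simp flip: pcompose_assoc)
qed

lemma degree_mirror: "degree (mirror p) = degree p"
  unfolding mirror_def by (simp add: degree_pcompose)

lemma lead_coeff_mirror: "lead_coeff (mirror p) = (-1) ^ degree p * lead_coeff p"
  unfolding mirror_def by (subst lead_coeff_comp) auto

lemma poly_pderiv_mirror_0: "poly (pderiv (mirror p)) 0 = - poly (pderiv p) 0"
  unfolding mirror_def by (simp add: pderiv_pcompose pderiv_pCons poly_pcompose)

lemma freud_integral_mirror: "freud_integral (mirror p) = freud_integral p"
proof -
  have "freud_integral p
      = \<bar>-1\<bar> *\<^sub>R integral\<^sup>L lborel (\<lambda>x. (\<lambda>x. poly p x * exp (- (x ^ 4))) (0 + (-1) * x))"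
    unfolding freud_integral_def by (rule lborel_integral_real_affine) simp
  then show ?thesis unfolding freud_integral_def by (simp add: poly_mirror)
qed

lemma mirror_X_mult:
  "mirror f = smult ((-1) ^ i) f \<Longrightarrow> mirror ([:0, 1:] * f) = smult ((-1) ^ Suc i) ([:0, 1:] * f)"
  unfolding mirror_mult by (simp add: mirror_def pcompose_pCons)

lemma mirror_X2_mult:
  "mirror f = smult ((-1) ^ i) f \<Longrightarrow> mirror ([:0, 0, 1:] * f) = smult ((-1) ^ i) ([:0, 0, 1:] * f)"
  unfolding mirror_mult by (simp add: mirror_def pcompose_pCons)

lemma monic_X_mult:
  fixes p :: "real poly"
  assumes "lead_coeff p = 1"
  shows "degree ([:0, 1:] * p) = Suc (degree p) \<and> lead_coeff ([:0, 1:] * p) = 1"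
proof -
  have "p \<noteq> 0" "[:0, 1:] * p = pCons 0 p" using assms by auto
  then show ?thesis using assms by simp
qed

lemma monic_X2_mult:
  fixes p :: "real poly"
  assumes "lead_coeff p = 1"
  shows "degree ([:0, 0, 1:] * p) = degree p + 2 \<and> lead_coeff ([:0, 0, 1:] * p) = 1"
proof -
  have "p \<noteq> 0" "[:0, 0, 1:] * p = pCons 0 (pCons 0 p)" using assms by auto
  then show ?thesis using assms by simp
qed

lemma degree_less_if_coeff_eq_0:
  "degree p \<le> n \<Longrightarrow> coeff p n = 0 \<Longrightarrow> p \<noteq> 0 \<Longrightarrow> degree p < n"
  by (metis leading_coeff_0_iff le_neq_implies_less)

locale reflection_invariant_ip =
  fixes ip :: "real poly \<Rightarrow> real poly \<Rightarrow> real"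
  assumes ip_add_left: "ip (p + q) r = ip p r + ip q r"
    and ip_smult_left: "ip (smult c p) r = c * ip p r"
    and ip_commute: "ip p q = ip q p"
    and ip_self_eq_0_imp: "ip p p = 0 \<Longrightarrow> p = 0"
    and ip_mirror: "ip (mirror p) (mirror q) = ip p q"
begin

lemma ip_smult_right: "ip r (smult c p) = c * ip r p"
  by (metis ip_commute ip_smult_left)

lemma ip_zero_left: "ip 0 r = 0"
  using ip_smult_left[of 0] by simp

lemma ip_zero_right: "ip r 0 = 0"
  by (metis ip_commute ip_zero_left)

lemma ip_diff_left: "ip (p - q) r = ip p r - ip q r"
  using ip_add_left[of "p - q" q r] by simp

lemma ip_diff_right: "ip r (p - q) = ip r p - ip r q"
  by (metis ip_commute ip_diff_left)

lemma ip_add_right: "ip r (p + q) = ip r p + ip r q"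
  by (metis ip_commute ip_add_left)

lemma ip_sum_left: "ip (\<Sum>j\<in>S. f j) r = (\<Sum>j\<in>S. ip (f j) r)"
  by (induction S rule: infinite_finite_induct) (simp_all add: ip_zero_left ip_add_left)

lemma ip_eq_0_if_opposite_parity:
  assumes "mirror f = smult ((-1) ^ i) f" "mirror g = smult ((-1) ^ j) g" "odd (i + j)"
  shows "ip f g = 0"
proof -
  have "ip f g = ip (mirror f) (mirror g)" by (simp add: ip_mirror)
  also have "\<dots> = (-1) ^ (i + j) * ip f g"
    using assms(1,2) by (simp add: ip_smult_left ip_smult_right power_add)
  also have "\<dots> = - ip f g" using assms(3) by simp
  finally show ?thesis by simp
qed

lemma monic_orth_unique:
  assumes p: "monic_orth ip n p" and p': "monic_orth ip n p'"
  shows "p = p'"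
proof (rule ccontr)
  assume "p \<noteq> p'"
  moreover have "degree (p - p') \<le> n" "coeff (p - p') n = 0"
    using p p' unfolding monic_orth_def by (auto intro: degree_diff_le)
  ultimately have "degree (p - p') < n" by (simp add: degree_less_if_coeff_eq_0)
  then have "ip (p - p') (p - p') = 0"
    using p p' unfolding monic_orth_def by (simp add: ip_diff_left)
  then show False using \<open>p \<noteq> p'\<close> ip_self_eq_0_imp[of "p - p'"] by simp
qed

text \<open>The mirror image of p, rescaled by (-1)^n, is again monic orthogonal of degree n,
  so uniqueness applies.\<close>
lemma monic_orth_mirror:
  assumes p: "monic_orth ip n p"
  shows "mirror p = smult ((-1) ^ n) p"
proof -
  define p' where "p' = smult ((-1) ^ n) (mirror p)"
  have deg: "degree p = n" and lead: "lead_coeff p = 1"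
    using p unfolding monic_orth_def by auto
  have "monic_orth ip n p'"
    unfolding monic_orth_def
  proof (intro conjI allI impI)
    show "degree p' = n" unfolding p'_def by (simp add: degree_mirror deg)
    show "lead_coeff p' = 1"
    proof -
      have "lead_coeff (mirror p) = (-1) ^ n" using lead_coeff_mirror[of p] deg lead by simp
      then show ?thesis unfolding p'_def lead_coeff_smult by (simp flip: power_mult_distrib)
    qed
    fix q :: "real poly"
    assume "degree q < n"
    then have "ip (mirror p) (mirror (mirror q)) = 0"
      using p unfolding monic_orth_def ip_mirror by (simp add: degree_mirror)
    then show "ip p' q = 0" unfolding p'_def by (simp add: mirror_mirror ip_smult_left)
  qed
  then have "p' = p" using monic_orth_unique[OF _ p] by blast
  moreover have "smult ((-1) ^ n) p' = mirror p"
    unfolding p'_def by (simp add: smult_smult flip: power_mult_distrib)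
  ultimately show ?thesis by simp
qed

end

locale monic_orthogonal_sequence = reflection_invariant_ip +
  fixes seq :: "nat \<Rightarrow> real poly"
  assumes monic_orth_seq: "monic_orth ip n (seq n)"
begin

lemma degree_seq: "degree (seq n) = n"
  and lead_coeff_seq: "lead_coeff (seq n) = 1"
  and ip_seq_eq_0: "degree q < n \<Longrightarrow> ip (seq n) q = 0"
  using monic_orth_seq[of n] unfolding monic_orth_def by auto

lemma seq_neq_0: "seq n \<noteq> 0"
  using lead_coeff_seq[of n] by auto

lemma ip_seq_seq_neq_0: "ip (seq n) (seq n) \<noteq> 0"
  using seq_neq_0 ip_self_eq_0_imp by blast

lemma ip_seq_seq_eq_0: "i \<noteq> j \<Longrightarrow> ip (seq i) (seq j) = 0"
  by (metis ip_commute ip_seq_eq_0 degree_seq linorder_neq_iff)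

lemma mirror_seq: "mirror (seq n) = smult ((-1) ^ n) (seq n)"
  using monic_orth_mirror[OF monic_orth_seq] .

lemma ip_seq_monic:
  assumes "degree r = n" "lead_coeff r = 1"
  shows "ip (seq n) r = ip (seq n) (seq n)"
proof -
  have "degree (r - seq n) \<le> n" by (rule degree_diff_le) (simp_all add: assms degree_seq)
  moreover have "coeff (r - seq n) n = 0" using assms lead_coeff_seq[of n] by (simp add: degree_seq)
  ultimately have "r - seq n = 0 \<or> degree (r - seq n) < n"
    using degree_less_if_coeff_eq_0 by blast
  then have "ip (seq n) (r - seq n) = 0" by (auto simp: ip_zero_right ip_seq_eq_0)
  then show ?thesis by (simp add: ip_diff_right)
qed

lemma ip_eq_0_if_orthogonal_lower:
  assumes "\<And>j. j < m \<Longrightarrow> ip D (seq j) = 0" "degree q < m"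
  shows "ip D q = 0"
  using assms
proof (induction m arbitrary: q)
  case 0
  then show ?case by simp
next
  case (Suc m)
  define r where "r = q - smult (coeff q m) (seq m)"
  have "degree r \<le> m" "coeff r m = 0"
    using Suc.prems(2) lead_coeff_seq[of m] unfolding r_def
    by (auto simp: degree_seq intro!: degree_diff_le order.trans[OF degree_smult_le])
  then have "ip D r = 0"
    using Suc degree_less_if_coeff_eq_0[of r m] by (cases "r = 0") (simp_all add: ip_zero_right)
  have "ip D q = ip D (r + smult (coeff q m) (seq m))" unfolding r_def by simp
  also have "\<dots> = ip D r + coeff q m * ip D (seq m)" by (simp add: ip_add_right ip_smult_right)
  finally show ?case using \<open>ip D r = 0\<close> Suc.prems(1)[of m] by simp
qed

lemma eq_0_if_orthogonal_lower:
  assumes "\<And>j. j < m \<Longrightarrow> ip D (seq j) = 0" "degree D \<le> m" "coeff D m = 0"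
  shows "D = 0"
proof (rule ccontr)
  assume "D \<noteq> 0"
  then have "ip D D = 0"
    using assms ip_eq_0_if_orthogonal_lower degree_less_if_coeff_eq_0 by blast
  then show False using \<open>D \<noteq> 0\<close> ip_self_eq_0_imp by blast
qed

lemma monic_expansion:
  assumes "degree p = m" "lead_coeff p = 1" "S \<subseteq> {..<m}"
    and "\<And>j. j < m \<Longrightarrow> j \<notin> S \<Longrightarrow> ip p (seq j) = 0"
  shows "p = seq m + (\<Sum>j\<in>S. smult (ip p (seq j) / ip (seq j) (seq j)) (seq j))"
proof -
  define E where "E = (\<Sum>j\<in>S. smult (ip p (seq j) / ip (seq j) (seq j)) (seq j))"
  have fin: "finite S" using assms(3) finite_subset by blast
  have ip_E: "ip E (seq i) = (if i \<in> S then ip p (seq i) else 0)" for i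
  proof -
    have "ip E (seq i) = (\<Sum>j\<in>S. if j = i then ip p (seq i) else 0)"
      unfolding E_def ip_sum_left
      by (intro sum.cong) (auto simp: ip_smult_left ip_seq_seq_eq_0 ip_seq_seq_neq_0)
    then show ?thesis using fin by simp
  qed
  have "p - seq m - E = 0"
  proof (rule eq_0_if_orthogonal_lower)
    fix j assume "j < m"
    then show "ip (p - seq m - E) (seq j) = 0"
      using assms(4) by (simp add: ip_diff_left ip_E ip_seq_seq_eq_0)
  next
    have "degree E \<le> m"
      unfolding E_def using assms(3)
      by (intro degree_sum_le fin order.trans[OF degree_smult_le]) (auto simp: degree_seq)
    then show "degree (p - seq m - E) \<le> m"
      using assms(1) by (intro degree_diff_le) (simp_all add: degree_seq)
    have "coeff E m = 0"
      unfolding E_def coeff_sum using assms(3) by (intro sum.neutral) (auto simp: coeff_eq_0 degree_seq)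
    then show "coeff (p - seq m - E) m = 0"
      using assms(1,2) lead_coeff_seq[of m] by (simp add: degree_seq)
  qed
  then show ?thesis unfolding E_def by (simp add: algebra_simps)
qed

lemma seq_0: "seq 0 = 1"
  using monic_expansion[of 1 0 "{}"] by simp

lemma seq_1: "seq 1 = [:0, 1:]"
proof -
  have "mirror [:0, 1:] = smult ((-1) ^ 1) [:0, 1:]" by (simp add: mirror_def pcompose_pCons)
  then have "ip [:0, 1:] (seq 0) = 0"
    using ip_eq_0_if_opposite_parity mirror_seq[of 0] by fastforce
  then show ?thesis using monic_expansion[of "[:0, 1:]" 1 "{}"] by simp
qed

end

lemma reflection_invariant_ip_ipF: "reflection_invariant_ip ipF"
proof
  fix p q r :: "real poly" and c :: real
  show "ipF (p + q) r = ipF p r + ipF q r"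
    by (simp add: ipF_eq_freud_integral distrib_right freud_integral_add)
  show "ipF (smult c p) r = c * ipF p r" by (simp add: ipF_eq_freud_integral freud_integral_smult)
  show "ipF p q = ipF q p" by (simp add: ipF_eq_freud_integral mult.commute)
  show "ipF p p = 0 \<Longrightarrow> p = 0"
    using freud_integral_square_pos[of p] by (auto simp: ipF_eq_freud_integral)
  show "ipF (mirror p) (mirror q) = ipF p q"
    by (simp add: ipF_eq_freud_integral freud_integral_mirror flip: mirror_mult)
qed

lemma reflection_invariant_ip_ipS:
  assumes "l1 \<ge> 0" "l2 \<ge> 0"
  shows "reflection_invariant_ip (ipS l1 l2)"
proof -
  interpret F: reflection_invariant_ip ipF by (rule reflection_invariant_ip_ipF)
  show ?thesis
  proof
    fix p q r :: "real poly" and c :: real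
    show "ipS l1 l2 (p + q) r = ipS l1 l2 p r + ipS l1 l2 q r"
      by (simp add: ipS_def F.ip_add_left pderiv_add algebra_simps)
    show "ipS l1 l2 (smult c p) r = c * ipS l1 l2 p r"
      by (simp add: ipS_def F.ip_smult_left pderiv_smult algebra_simps)
    show "ipS l1 l2 p q = ipS l1 l2 q p" by (simp add: ipS_def F.ip_commute algebra_simps)
    show "ipS l1 l2 (mirror p) (mirror q) = ipS l1 l2 p q"
      by (simp add: ipS_def F.ip_mirror poly_pderiv_mirror_0 poly_mirror)
    assume "ipS l1 l2 p p = 0"
    moreover have "ipF p p \<ge> 0"
      using freud_integral_square_nonneg[of p] by (simp add: ipF_eq_freud_integral)
    moreover have "l1 * poly p 0 * poly p 0 \<ge> 0" "l2 * poly (pderiv p) 0 * poly (pderiv p) 0 \<ge> 0"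
      using assms by (simp_all add: mult.assoc)
    ultimately have "ipF p p = 0" unfolding ipS_def by linarith
    then show "p = 0" by (rule F.ip_self_eq_0_imp)
  qed
qed

lemma ipF_mult_left_commute: "ipF (h * f) g = ipF f (h * g)"
  unfolding ipF_eq_freud_integral by (simp add: mult_ac)

lemma ipS_X_mult_left:
  "ipS l1 l2 ([:0, 1:] * f) g = ipF f ([:0, 1:] * g) + l2 * poly f 0 * poly (pderiv g) 0"
  unfolding ipS_def ipF_mult_left_commute by (simp add: pderiv_mult pderiv_pCons)

text \<open>x^2 f vanishes to second order at 0, so the point masses do not see it.\<close>
lemma ipS_X2_mult_left: "ipS l1 l2 ([:0, 0, 1:] * f) g = ipF f ([:0, 0, 1:] * g)"
  unfolding ipS_def ipF_mult_left_commute by (simp add: pderiv_mult pderiv_pCons)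

lemma less_add_2_cases:
  fixes j n :: nat
  assumes "j < n + 2" "j \<noteq> n" "j \<noteq> n - 2" "2 \<le> n"
  shows "j + 2 < n \<or> odd (n + j)"
proof -
  have "j + 2 < n \<or> n = j + 1 \<or> j = n + 1" using assms by linarith
  then show ?thesis by auto
qed

locale freud_sobolev_orthogonal =
  fixes l1 l2 :: real and P Q :: "nat \<Rightarrow> real poly"
  assumes l1_nonneg: "l1 \<ge> 0" and l2_nonneg: "l2 \<ge> 0"
    and monic_orth_P: "monic_orth ipF n (P n)"
    and monic_orth_Q: "monic_orth (ipS l1 l2) n (Q n)"
begin

sublocale F: monic_orthogonal_sequence ipF P
  by (intro monic_orthogonal_sequence.intro reflection_invariant_ip_ipF)
    (unfold_locales, rule monic_orth_P)

sublocale S: monic_orthogonal_sequence "ipS l1 l2" Q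
  by (intro monic_orthogonal_sequence.intro reflection_invariant_ip_ipS l1_nonneg l2_nonneg)
    (unfold_locales, rule monic_orth_Q)

lemma X_mult_P_odd:
  assumes "odd m"
  shows "[:0, 1:] * P m
    = Q (Suc m) + smult (ipF (P m) (P m) / ipS l1 l2 (Q (m - 1)) (Q (m - 1))) (Q (m - 1))"
proof -
  have "poly (P m) 0 = - poly (P m) 0"
    using poly_mirror[of "P m" 0] F.mirror_seq[of m] assms by simp
  then have ip_XP: "ipS l1 l2 ([:0, 1:] * P m) q = ipF (P m) ([:0, 1:] * q)" for q
    using ipS_X_mult_left[of l1 l2 "P m" q] by simp
  have "[:0, 1:] * P m = Q (Suc m) + (\<Sum>j\<in>{m - 1}.
      smult (ipS l1 l2 ([:0, 1:] * P m) (Q j) / ipS l1 l2 (Q j) (Q j)) (Q j))"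
  proof (rule S.monic_expansion)
    show "degree ([:0, 1:] * P m) = Suc m" "lead_coeff ([:0, 1:] * P m) = 1"
      using monic_X_mult[OF F.lead_coeff_seq[of m]] unfolding F.degree_seq by auto
    show "{m - 1} \<subseteq> {..<Suc m}" by auto
    fix j assume "j < Suc m" "j \<notin> {m - 1}"
    then consider "Suc j < m" | "j = m" by fastforce
    then show "ipS l1 l2 ([:0, 1:] * P m) (Q j) = 0"
    proof cases
      case 1
      then show ?thesis
        unfolding ip_XP using monic_X_mult[OF S.lead_coeff_seq[of j]]
        by (intro F.ip_seq_eq_0) (simp only: S.degree_seq)
    next
      case 2
      then show ?thesis
        unfolding ip_XP
        by (intro F.ip_eq_0_if_opposite_parity[OF F.mirror_seq mirror_X_mult[OF S.mirror_seq]]) simp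
    qed
  qed
  moreover have "ipS l1 l2 ([:0, 1:] * P m) (Q (m - 1)) = ipF (P m) (P m)"
  proof -
    have "Suc (m - 1) = m" using odd_pos[OF assms] by simp
    then show ?thesis
      unfolding ip_XP using monic_X_mult[OF S.lead_coeff_seq[of "m - 1"]]
      by (metis F.ip_seq_monic S.degree_seq)
  qed
  ultimately show ?thesis by simp
qed

lemma X2_mult_P:
  assumes "n \<ge> 2"
  shows "[:0, 0, 1:] * P n = Q (n + 2)
    + smult (ipS l1 l2 ([:0, 0, 1:] * P n) (Q n) / ipS l1 l2 (Q n) (Q n)) (Q n)
    + smult (ipF (P n) (P n) / ipS l1 l2 (Q (n - 2)) (Q (n - 2))) (Q (n - 2))"
proof -
  note ip_XP = ipS_X2_mult_left[of l1 l2 "P n"]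
  have "[:0, 0, 1:] * P n = Q (n + 2) + (\<Sum>j\<in>{n, n - 2}.
      smult (ipS l1 l2 ([:0, 0, 1:] * P n) (Q j) / ipS l1 l2 (Q j) (Q j)) (Q j))"
  proof (rule S.monic_expansion)
    show "degree ([:0, 0, 1:] * P n) = n + 2" "lead_coeff ([:0, 0, 1:] * P n) = 1"
      using monic_X2_mult[OF F.lead_coeff_seq[of n]] unfolding F.degree_seq by auto
    show "{n, n - 2} \<subseteq> {..<n + 2}" by auto
    fix j assume "j < n + 2" "j \<notin> {n, n - 2}"
    then consider "j + 2 < n" | "odd (n + j)" using less_add_2_cases[of j n] assms by auto
    then show "ipS l1 l2 ([:0, 0, 1:] * P n) (Q j) = 0"
    proof cases
      case 1
      then show ?thesis
        unfolding ip_XP using monic_X2_mult[OF S.lead_coeff_seq[of j]]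
        by (intro F.ip_seq_eq_0) (simp only: S.degree_seq)
    next
      case 2
      then show ?thesis
        unfolding ip_XP by (rule F.ip_eq_0_if_opposite_parity[OF F.mirror_seq mirror_X2_mult[OF S.mirror_seq]])
    qed
  qed
  moreover have "ipS l1 l2 ([:0, 0, 1:] * P n) (Q (n - 2)) = ipF (P n) (P n)"
  proof -
    have "n - 2 + 2 = n" using assms by simp
    then show ?thesis
      unfolding ip_XP using monic_X2_mult[OF S.lead_coeff_seq[of "n - 2"]]
      by (metis F.ip_seq_monic S.degree_seq)
  qed
  ultimately show ?thesis using assms by (simp add: add.assoc)
qed

lemma X2_mult_Q:
  assumes "n \<ge> 2"
  shows "[:0, 0, 1:] * Q n = P (n + 2)
    + smult (ipS l1 l2 ([:0, 0, 1:] * P n) (Q n) / ipF (P n) (P n)) (P n)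
    + smult (ipS l1 l2 (Q n) (Q n) / ipF (P (n - 2)) (P (n - 2))) (P (n - 2))"
proof -
  have ip_XQ: "ipF ([:0, 0, 1:] * Q n) (P j) = ipS l1 l2 (Q n) ([:0, 0, 1:] * P j)" for j
    by (metis ipS_X2_mult_left F.ip_commute S.ip_commute)
  have "[:0, 0, 1:] * Q n = P (n + 2) + (\<Sum>j\<in>{n, n - 2}.
      smult (ipF ([:0, 0, 1:] * Q n) (P j) / ipF (P j) (P j)) (P j))"
  proof (rule F.monic_expansion)
    show "degree ([:0, 0, 1:] * Q n) = n + 2" "lead_coeff ([:0, 0, 1:] * Q n) = 1"
      using monic_X2_mult[OF S.lead_coeff_seq[of n]] unfolding S.degree_seq by auto
    show "{n, n - 2} \<subseteq> {..<n + 2}" by auto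
    fix j assume "j < n + 2" "j \<notin> {n, n - 2}"
    then consider "j + 2 < n" | "odd (n + j)" using less_add_2_cases[of j n] assms by auto
    then show "ipF ([:0, 0, 1:] * Q n) (P j) = 0"
    proof cases
      case 1
      then show ?thesis
        unfolding ip_XQ using monic_X2_mult[OF F.lead_coeff_seq[of j]]
        by (intro S.ip_seq_eq_0) (simp only: F.degree_seq)
    next
      case 2
      then show ?thesis
        unfolding ip_XQ by (rule S.ip_eq_0_if_opposite_parity[OF S.mirror_seq mirror_X2_mult[OF F.mirror_seq]])
    qed
  qed
  moreover have "ipF ([:0, 0, 1:] * Q n) (P n) = ipS l1 l2 ([:0, 0, 1:] * P n) (Q n)"
    unfolding ip_XQ by (rule S.ip_commute)
  moreover have "ipF ([:0, 0, 1:] * Q n) (P (n - 2)) = ipS l1 l2 (Q n) (Q n)"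
  proof -
    have "n - 2 + 2 = n" using assms by simp
    then show ?thesis
      unfolding ip_XQ using monic_X2_mult[OF F.lead_coeff_seq[of "n - 2"]]
      by (metis S.ip_seq_monic F.degree_seq)
  qed
  ultimately show ?thesis using assms by (simp add: add.assoc)
qed

end

theorem mainTheorem6:
  fixes l1 l2 :: real and P Q :: "nat \<Rightarrow> real poly"
  assumes "l1 \<ge> 0" and "l2 > 0"
    and P: "\<And>n. monic_orth ipF n (P n)"
    and Q: "\<And>n. monic_orth (ipS l1 l2) n (Q n)"
  defines "k \<equiv> \<lambda>n. ipF (P n) (P n)"
    and "kh \<equiv> \<lambda>n. ipS l1 l2 (Q n) (Q n)"
  defines "a \<equiv> \<lambda>n. k (2*n - 1) / kh (2*n - 2)"
    and "\<alpha> \<equiv> \<lambda>n. k n / kh (n - 2)"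
    and "b \<equiv> \<lambda>n. ipS l1 l2 ([:0,0,1:] * P n) (Q n) / ipS l1 l2 (Q n) (Q n)"
    and "\<delta> \<equiv> \<lambda>n. kh n / k (n - 2)"
  defines "\<sigma> \<equiv> \<lambda>n. b n * (kh n / k n)"
  shows "Q 0 = 1 \<and> Q 1 = [:0,1:]
    \<and> (\<forall>n\<ge>1. [:0,1:] * P (2*n - 1) = Q (2*n) + smult (a n) (Q (2*n - 2)))
    \<and> (\<forall>n\<ge>2. [:0,0,1:] * P n = Q (n+2) + smult (b n) (Q n) + smult (\<alpha> n) (Q (n - 2)))
    \<and> (\<forall>n\<ge>2. [:0,0,1:] * Q n = P (n+2) + smult (\<sigma> n) (P n) + smult (\<delta> n) (P (n - 2)))"
proof -
  interpret freud_sobolev_orthogonal l1 l2 P Q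
    using assms(1,2) P Q by unfold_locales auto
  have "[:0,1:] * P (2*n - 1) = Q (2*n) + smult (a n) (Q (2*n - 2))" if "n \<ge> 1" for n
  proof -
    have "odd (2*n - 1)" "Suc (2*n - 1) = 2*n" "2*n - 1 - 1 = 2*n - 2" using that by auto
    then show ?thesis using X_mult_P_odd[of "2*n - 1"] unfolding a_def k_def kh_def by simp
  qed
  moreover have "\<sigma> n = ipS l1 l2 ([:0,0,1:] * P n) (Q n) / ipF (P n) (P n)" for n
    unfolding \<sigma>_def b_def kh_def k_def using S.ip_seq_seq_neq_0[of n] by simp
  ultimately show ?thesis
    using S.seq_0 S.seq_1 X2_mult_P X2_mult_Q unfolding \<alpha>_def \<delta>_def b_def k_def kh_def by simp
qed

end
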